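(* There is a tight simplex of $25$ points in $\mathbb{O}\mathbb{P}^2$. In fact, there is such a tight simplex with cyclic symmetry, i.e., one mapped to itself by the isometry of $\mathbb{O}\mathbb{P}^2$ induced by the cyclic shift $\sigma(a,b,c)=(b,c,a)$ (conjugation of projection matrices by the corresponding permutation matrix).
   Context: $\mathbb{O}\mathbb{P}^2$ is the set of $3\times3$ octonionic Hermitian matrices $\Pi$ with $\Pi^2=\Pi$ and $\operatorname{Tr}\Pi=1$ (each of the form $(a,b,c)^t(\bar a,\bar b,\bar c)$), with inner product $\langle A,B\rangle=\operatorname{Re}\operatorname{Tr}(AB)$. A tight simplex of $N$ points in $\mathbb{O}\mathbb{P}^2$ is a set of $N$ distinct points $\Pi_1,\dots,\Pi_N$ with $\langle\Pi_i,\Pi_j\rangle=\frac{N-3}{3(N-1)}$ for all $i\ne j$. *)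

theory Defs
  imports "HOL-Analysis.Analysis" "HOL-Library.Numeral_Type"
begin

text \<open>Quaternions and octonions via the Cayley-Dickson construction
  (a,b)(c,d) = (ac - d* b, da + b c*), (a,b)* = (a*, -b).
  Addition, negation and zero are the componentwise ones on product types.\<close>

type_synonym quat = "complex \<times> complex"
type_synonym oct = "quat \<times> quat"

fun qmul :: "quat \<Rightarrow> quat \<Rightarrow> quat" where
  "qmul (a, b) (c, d) = (a * c - cnj d * b, d * a + b * cnj c)"

fun qconj :: "quat \<Rightarrow> quat" where
  "qconj (a, b) = (cnj a, - b)"

fun omul :: "oct \<Rightarrow> oct \<Rightarrow> oct" where
  "omul (p, q) (r, s) = (qmul p r - qmul (qconj s) q, qmul s p + qmul q (qconj r))"

fun oconj :: "oct \<Rightarrow> oct" where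
  "oconj (p, q) = (qconj p, - q)"

definition ore :: "oct \<Rightarrow> real" where
  "ore x = Re (fst (fst x))"

definition oreal :: "real \<Rightarrow> oct" where
  "oreal r = ((complex_of_real r, 0), (0, 0))"

type_synonym omat = "3 \<Rightarrow> 3 \<Rightarrow> oct"

definition mmul :: "omat \<Rightarrow> omat \<Rightarrow> omat" where
  "mmul A B = (\<lambda>i j. \<Sum>k\<in>UNIV. omul (A i k) (B k j))"

definition mtrace :: "omat \<Rightarrow> oct" where
  "mtrace A = (\<Sum>i\<in>UNIV. A i i)"

definition hermitian :: "omat \<Rightarrow> bool" where
  "hermitian A \<longleftrightarrow> (\<forall>i j. A j i = oconj (A i j))"

definition OP2 :: "omat set" where
  "OP2 = {P. hermitian P \<and> mmul P P = P \<and> mtrace P = oreal 1}"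

definition minner :: "omat \<Rightarrow> omat \<Rightarrow> real" where
  "minner A B = ore (mtrace (mmul A B))"

definition tight_simplex :: "omat set \<Rightarrow> bool" where
  "tight_simplex S \<longleftrightarrow> finite S \<and> S \<subseteq> OP2 \<and>
     (\<forall>A\<in>S. \<forall>B\<in>S. A \<noteq> B \<longrightarrow>
        minner A B = (real (card S) - 3) / (3 * (real (card S) - 1)))"

text \<open>Isometry induced by the cyclic shift sigma(a,b,c) = (b,c,a):
  conjugation P M P^T by the permutation matrix P, i.e. entry (i,j) becomes
  entry (i+1, j+1) (indices mod 3).\<close>
definition cyc_shift :: "omat \<Rightarrow> omat" where
  "cyc_shift M = (\<lambda>i j. M (i + 1) (j + 1))"

end

theory Submission
  imports Defs
begin

(* The points of the simplex are projections onto lines (a, b, c) with |a|^2 = |b|^2 = |c|^2 = 1/3,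
   i.e. Hermitian matrices with diagonal 1/3 and upper entries x, y, z.  For such a matrix,
   idempotency amounts to |x| = |y| = |z| = 1/3 together with  y conj(z) = x/3,  x z = y/3  and
   conj(x) y = z/3,  and the inner product of two of them is 1/3 + 2 (x.x' + y.y' + z.z'), with
   the Euclidean inner product on the eight real coordinates.  Tightness for 25 points asks for
   mutual inner products 11/36, i.e. coordinate sums -1/72.  The cyclic shift acts on triples by
   (x, y, z) |-> (z, conj x, conj y) and is an isometry of period three; the simplex consists of
   its fixed point x = y = z = 1/3 and the orbits of eight rational triples, so everything reduces
   to exact rational arithmetic, and inner products need only be checked against the nine orbit
   representatives. *)

definition oc :: "real \<Rightarrow> real \<Rightarrow> real \<Rightarrow> real \<Rightarrow> real \<Rightarrow> real \<Rightarrow> real \<Rightarrow> real \<Rightarrow> oct" where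
  "oc a0 a1 a2 a3 a4 a5 a6 a7 = ((Complex a0 a1, Complex a2 a3), (Complex a4 a5, Complex a6 a7))"

lemma oc_cases: obtains a0 a1 a2 a3 a4 a5 a6 a7 where "x = oc a0 a1 a2 a3 a4 a5 a6 a7"
  by (metis complex.exhaust oc_def prod.collapse)

lemma oc_eq_iff: "oc a0 a1 a2 a3 a4 a5 a6 a7 = oc b0 b1 b2 b3 b4 b5 b6 b7 \<longleftrightarrow>
   a0 = b0 \<and> a1 = b1 \<and> a2 = b2 \<and> a3 = b3 \<and> a4 = b4 \<and> a5 = b5 \<and> a6 = b6 \<and> a7 = b7"
  by (auto simp: oc_def)

lemma omul_oc: "omul (oc a0 a1 a2 a3 a4 a5 a6 a7) (oc b0 b1 b2 b3 b4 b5 b6 b7) = oc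
 (a0*b0 - a1*b1 - a2*b2 - a3*b3 - a4*b4 - a5*b5 - a6*b6 - a7*b7)
 (a0*b1 + a1*b0 + a2*b3 - a3*b2 + a4*b5 - a5*b4 - a6*b7 + a7*b6)
 (a0*b2 - a1*b3 + a2*b0 + a3*b1 + a4*b6 + a5*b7 - a6*b4 - a7*b5)
 (a0*b3 + a1*b2 - a2*b1 + a3*b0 + a4*b7 - a5*b6 + a6*b5 - a7*b4)
 (a0*b4 - a1*b5 - a2*b6 - a3*b7 + a4*b0 + a5*b1 + a6*b2 + a7*b3)
 (a0*b5 + a1*b4 - a2*b7 + a3*b6 - a4*b1 + a5*b0 - a6*b3 + a7*b2)
 (a0*b6 + a1*b7 + a2*b4 - a3*b5 - a4*b2 + a5*b3 + a6*b0 - a7*b1)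
 (a0*b7 - a1*b6 + a2*b5 + a3*b4 - a4*b3 - a5*b2 + a6*b1 + a7*b0)"
  by (simp add: oc_def Complex_simps algebra_simps)

lemma oconj_oc: "oconj (oc a0 a1 a2 a3 a4 a5 a6 a7) = oc a0 (-a1) (-a2) (-a3) (-a4) (-a5) (-a6) (-a7)"
  by (simp add: oc_def Complex_simps)

lemma plus_oc: "oc a0 a1 a2 a3 a4 a5 a6 a7 + oc b0 b1 b2 b3 b4 b5 b6 b7 =
   oc (a0+b0) (a1+b1) (a2+b2) (a3+b3) (a4+b4) (a5+b5) (a6+b6) (a7+b7)"
  by (simp add: oc_def Complex_simps)

lemma scaleR_oc: "r *\<^sub>R oc a0 a1 a2 a3 a4 a5 a6 a7 =
   oc (r*a0) (r*a1) (r*a2) (r*a3) (r*a4) (r*a5) (r*a6) (r*a7)"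
  by (simp add: oc_def complex_eq_iff)

lemma inner_oc: "oc a0 a1 a2 a3 a4 a5 a6 a7 \<bullet> oc b0 b1 b2 b3 b4 b5 b6 b7 =
   a0*b0 + a1*b1 + a2*b2 + a3*b3 + a4*b4 + a5*b5 + a6*b6 + a7*b7"
  by (simp add: oc_def inner_complex_def)

lemma oreal_oc: "oreal r = oc r 0 0 0 0 0 0 0"
  by (simp add: oreal_def oc_def complex_of_real_def zero_prod_def complex_eq_iff)

lemma ore_oc: "ore (oc a0 a1 a2 a3 a4 a5 a6 a7) = a0"
  by (simp add: ore_def oc_def)

lemmas oc_arith = omul_oc oconj_oc plus_oc scaleR_oc inner_oc oreal_oc ore_oc oc_eq_iff

lemma oconj_oconj [simp]: "oconj (oconj x) = x"
  by (cases x rule: oc_cases) (simp add: oc_arith)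

lemma oconj_omul: "oconj (omul x y) = omul (oconj y) (oconj x)"
  by (cases x rule: oc_cases, cases y rule: oc_cases) (simp add: oc_arith algebra_simps)

lemma oconj_scaleR: "oconj (r *\<^sub>R x) = r *\<^sub>R oconj x"
  by (cases x rule: oc_cases) (simp add: oc_arith)

lemma oconj_oreal [simp]: "oconj (oreal r) = oreal r"
  by (simp add: oc_arith)

lemma oreal_add: "oreal r + oreal s = oreal (r + s)"
  by (simp add: oc_arith)

lemma omul_oreal_left: "omul (oreal r) x = r *\<^sub>R x"
  by (cases x rule: oc_cases) (simp add: oc_arith)

lemma omul_oreal_right: "omul x (oreal r) = r *\<^sub>R x"
  by (cases x rule: oc_cases) (simp add: oc_arith)

lemma omul_oconj_self: "omul x (oconj x) = oreal (x \<bullet> x)"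
  by (cases x rule: oc_cases) (simp add: oc_arith algebra_simps power2_eq_square)

lemma omul_oconj_self_left: "omul (oconj x) x = oreal (x \<bullet> x)"
  by (cases x rule: oc_cases) (simp add: oc_arith algebra_simps power2_eq_square)

lemma scaleR_oreal: "r *\<^sub>R oreal s = oreal (r * s)"
  by (simp add: oc_arith)

lemma ore_add: "ore (x + y) = ore x + ore y"
  by (simp add: ore_def)

lemma ore_oreal: "ore (oreal r) = r"
  by (simp add: oc_arith)

lemma ore_omul_oconj: "ore (omul x (oconj y)) = x \<bullet> y"
  by (cases x rule: oc_cases, cases y rule: oc_cases) (simp add: oc_arith)

lemma ore_omul_oconj_left: "ore (omul (oconj x) y) = x \<bullet> y"
  by (cases x rule: oc_cases, cases y rule: oc_cases) (simp add: oc_arith)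

lemma sum_UNIV_add_right: "(\<Sum>k\<in>UNIV. f (k + c)) = (\<Sum>k\<in>UNIV. f (k :: 'a :: group_add))"
  by (rule sum.reindex_bij_witness[of _ "\<lambda>k. k - c" "\<lambda>k. k + c"]) auto

lemma UNIV_3: "(UNIV::3 set) = {0, 1, 2}"
proof -
  have "x \<in> {0, 1, 2}" for x :: 3
    using exhaust_3[of x] by auto
  then show ?thesis
    by blast
qed

lemma forall_3: "(\<forall>i::3. P i) \<longleftrightarrow> P 0 \<and> P 1 \<and> P 2"
proof -
  have "(\<forall>i::3. P i) \<longleftrightarrow> (\<forall>i\<in>{0, 1, 2}. P i)"
    by (simp only: UNIV_3[symmetric] ball_UNIV)
  then show ?thesis
    by simp
qed

lemma sum_UNIV_3: "(\<Sum>k\<in>(UNIV::3 set). f k) = f 0 + f 1 + f 2"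
proof -
  have "f 3 = f 0"
    by (rule arg_cong[where f = f]) simp
  then show ?thesis
    using sum_3[of f] by (simp add: ac_simps)
qed

definition mat3 :: "oct \<Rightarrow> oct \<Rightarrow> oct \<Rightarrow> oct \<Rightarrow> oct \<Rightarrow> oct \<Rightarrow> oct \<Rightarrow> oct \<Rightarrow> oct \<Rightarrow> omat" where
  "mat3 a b c d e f g h k = (\<lambda>i j. if i = 0 then (if j = 0 then a else if j = 1 then b else c)
     else if i = 1 then (if j = 0 then d else if j = 1 then e else f)
     else (if j = 0 then g else if j = 1 then h else k))"

lemma mat3_eq_iff: "mat3 a b c d e f g h k = mat3 a' b' c' d' e' f' g' h' k' \<longleftrightarrow>
  a = a' \<and> b = b' \<and> c = c' \<and> d = d' \<and> e = e' \<and> f = f' \<and> g = g' \<and> h = h' \<and> k = k'"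
  by (simp add: fun_eq_iff forall_3 mat3_def)

lemma mmul_mat3: "mmul (mat3 a b c d e f g h k) (mat3 a' b' c' d' e' f' g' h' k') =
  mat3 (omul a a' + omul b d' + omul c g') (omul a b' + omul b e' + omul c h') (omul a c' + omul b f' + omul c k')
       (omul d a' + omul e d' + omul f g') (omul d b' + omul e e' + omul f h') (omul d c' + omul e f' + omul f k')
       (omul g a' + omul h d' + omul k g') (omul g b' + omul h e' + omul k h') (omul g c' + omul h f' + omul k k')"
  by (simp add: fun_eq_iff forall_3 mmul_def sum_UNIV_3 mat3_def)

lemma mtrace_mat3: "mtrace (mat3 a b c d e f g h k) = a + e + k"
  by (simp add: mtrace_def sum_UNIV_3 mat3_def)

lemma hermitian_mat3: "hermitian (mat3 a b c d e f g h k) \<longleftrightarrow>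
  oconj a = a \<and> oconj b = d \<and> oconj c = g \<and> oconj d = b \<and> oconj e = e \<and> oconj f = h
  \<and> oconj g = c \<and> oconj h = f \<and> oconj k = k"
  by (auto simp: hermitian_def forall_3 mat3_def)

lemma cyc_shift_mat3: "cyc_shift (mat3 a b c d e f g h k) = mat3 e f d h k g b c a"
  by (simp add: fun_eq_iff forall_3 cyc_shift_def mat3_def)

lemma add_one_cube_3: "(i::3) + 1 + 1 + 1 = i"
proof -
  have "(1::3) + 1 + 1 = 0"
    by simp
  then show ?thesis
    by (simp only: add.assoc add_0_right)
qed

lemma cyc_shift_cube: "cyc_shift (cyc_shift (cyc_shift M)) = M"
  unfolding cyc_shift_def add_one_cube_3 ..

lemma mmul_cyc_shift: "mmul (cyc_shift A) (cyc_shift B) = cyc_shift (mmul A B)"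
  unfolding mmul_def cyc_shift_def
  by (simp add: sum_UNIV_add_right[where f = "\<lambda>k. omul (A _ k) (B k _)"])

lemma mtrace_cyc_shift: "mtrace (cyc_shift M) = mtrace M"
  unfolding mtrace_def cyc_shift_def
  by (rule sum_UNIV_add_right[where f = "\<lambda>k. M k k"])

lemma cyc_shift_OP2:
  assumes "M \<in> OP2"
  shows "cyc_shift M \<in> OP2"
proof -
  have herm: "hermitian M" and idem: "mmul M M = M" and tr: "mtrace M = oreal 1"
    using assms by (simp_all add: OP2_def)
  from herm have "hermitian (cyc_shift M)"
    unfolding hermitian_def cyc_shift_def by blast
  then show ?thesis
    by (simp add: OP2_def mmul_cyc_shift mtrace_cyc_shift idem tr)
qed

definition orbit :: "omat \<Rightarrow> omat list" where
  "orbit M = [M, cyc_shift M, cyc_shift (cyc_shift M)]"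

lemma cyc_shift_image_orbit: "cyc_shift ` set (orbit M) = set (orbit M)"
  by (simp add: orbit_def cyc_shift_cube insert_commute)

lemma orbit_subset_OP2: "M \<in> OP2 \<Longrightarrow> set (orbit M) \<subseteq> OP2"
  by (simp add: orbit_def cyc_shift_OP2)

lemma cyc_shift_image_orbits:
  assumes "cyc_shift M = M"
  shows "cyc_shift ` set (M # concat (map orbit Ms)) = set (M # concat (map orbit Ms))"
  by (simp add: assms image_UN cyc_shift_image_orbit)

lemma orbits_subset_OP2:
  assumes "M \<in> OP2" and "set Ms \<subseteq> OP2"
  shows "set (M # concat (map orbit Ms)) \<subseteq> OP2"
  using assms orbit_subset_OP2 by auto

lemma minner_cyc_shift: "minner (cyc_shift A) (cyc_shift B) = minner A B"
  by (simp add: minner_def mmul_cyc_shift mtrace_cyc_shift)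

lemma minner_orbit:
  assumes closed: "cyc_shift ` T \<subseteq> T"
    and rep: "\<forall>B\<in>T. M \<noteq> B \<longrightarrow> minner M B = c"
    and "A \<in> set (orbit M)" "B \<in> T" "A \<noteq> B"
  shows "minner A B = c"
proof -
  have T: "cyc_shift B \<in> T" "cyc_shift (cyc_shift B) \<in> T"
    using closed \<open>B \<in> T\<close> by auto
  from \<open>A \<in> set (orbit M)\<close> consider "A = M" | "A = cyc_shift M" | "A = cyc_shift (cyc_shift M)"
    by (auto simp: orbit_def)
  then show ?thesis
  proof cases
    case 1
    then show ?thesis using rep \<open>B \<in> T\<close> \<open>A \<noteq> B\<close> by blast
  next
    case 2
    then have "M \<noteq> cyc_shift (cyc_shift B)" and "A = cyc_shift M"
      using \<open>A \<noteq> B\<close> cyc_shift_cube by metis+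
    then show ?thesis
      using rep T minner_cyc_shift cyc_shift_cube by metis
  next
    case 3
    then have "M \<noteq> cyc_shift B" and "A = cyc_shift (cyc_shift M)"
      using \<open>A \<noteq> B\<close> cyc_shift_cube by metis+
    then show ?thesis
      using rep T minner_cyc_shift cyc_shift_cube by metis
  qed
qed

definition unbiased_mat :: "oct \<Rightarrow> oct \<Rightarrow> oct \<Rightarrow> omat" where
  "unbiased_mat x y z = mat3 (oreal (1/3)) x y (oconj x) (oreal (1/3)) z (oconj y) (oconj z) (oreal (1/3))"

lemma unbiased_mat_eq_iff:
  "unbiased_mat x y z = unbiased_mat x' y' z' \<longleftrightarrow> x = x' \<and> y = y' \<and> z = z'"
  by (auto simp: unbiased_mat_def mat3_eq_iff)

lemma cyc_shift_unbiased_mat: "cyc_shift (unbiased_mat x y z) = unbiased_mat z (oconj x) (oconj y)"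
  by (simp add: unbiased_mat_def cyc_shift_mat3)

lemma minner_unbiased_mat:
  "minner (unbiased_mat x y z) (unbiased_mat x' y' z') = 1/3 + 2 * (x \<bullet> x' + y \<bullet> y' + z \<bullet> z')"
  by (simp add: minner_def unbiased_mat_def mmul_mat3 mtrace_mat3 ore_add ore_omul_oconj
      ore_omul_oconj_left omul_oreal_left scaleR_oreal ore_oreal)

lemma unbiased_mat_in_OP2:
  assumes "x \<bullet> x = 1/9" "y \<bullet> y = 1/9" "z \<bullet> z = 1/9"
    and yz: "omul y (oconj z) = (1/3) *\<^sub>R x"
    and xz: "omul x z = (1/3) *\<^sub>R y"
    and xy: "omul (oconj x) y = (1/3) *\<^sub>R z"
  shows "unbiased_mat x y z \<in> OP2"
proof -
  have zy: "omul z (oconj y) = (1/3) *\<^sub>R oconj x"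
    using arg_cong[OF yz, of oconj] by (simp add: oconj_omul oconj_scaleR)
  have zx: "omul (oconj z) (oconj x) = (1/3) *\<^sub>R oconj y"
    using arg_cong[OF xz, of oconj] by (simp add: oconj_omul oconj_scaleR)
  have yx: "omul (oconj y) x = (1/3) *\<^sub>R oconj z"
    using arg_cong[OF xy, of oconj] by (simp add: oconj_omul oconj_scaleR)
  have thirds: "(1/3) *\<^sub>R w + (1/3) *\<^sub>R w + (1/3) *\<^sub>R w = w" for w :: oct
    by (simp flip: scaleR_add_left)
  have "mmul (unbiased_mat x y z) (unbiased_mat x y z) = unbiased_mat x y z"
    by (simp add: assms zy zx yx unbiased_mat_def mmul_mat3 mat3_eq_iff omul_oreal_left omul_oreal_right
        omul_oconj_self omul_oconj_self_left scaleR_oreal oreal_add thirds)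
  moreover have "mtrace (unbiased_mat x y z) = oreal 1"
    by (simp add: unbiased_mat_def mtrace_mat3 oreal_add)
  moreover have "hermitian (unbiased_mat x y z)"
    by (simp add: unbiased_mat_def hermitian_mat3)
  ultimately show ?thesis
    by (simp add: OP2_def)
qed

definition centre :: omat where
  "centre = unbiased_mat (oreal (1/3)) (oreal (1/3)) (oreal (1/3))"

definition generator_triples :: "(oct \<times> oct \<times> oct) list" where
  "generator_triples = [
   (oc (1/8) (5/24) (1/8) (1/24) 0 0 (1/12) (1/6),
    oc (-1/12) 0 (-1/12) (-1/6) (1/12) (-1/6) (1/6) (-1/12),
    oc (-1/12) 0 (-1/6) (1/12) (1/12) (-1/6) (1/12) (1/6)),
   (oc (1/8) (-5/24) (1/24) (-1/8) (-1/6) (-1/12) 0 0,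
    oc (-1/12) 0 (-1/12) (-1/6) (1/6) (1/12) (1/12) (1/6),
    oc (-1/12) 0 (1/6) (-1/12) (-1/12) (1/6) (1/12) (1/6)),
   (oc (1/8) (5/24) (-1/8) (-1/24) 0 0 (1/6) (-1/12),
    oc (-1/12) 0 (1/12) (1/6) (1/6) (1/12) (-1/12) (-1/6),
    oc (-1/12) 0 (1/6) (-1/12) (1/6) (1/12) (1/6) (-1/12)),
   (oc (1/8) (-5/24) (-1/24) (1/8) (1/12) (-1/6) 0 0,
    oc (-1/12) 0 (1/12) (1/6) (-1/12) (1/6) (1/6) (-1/12),
    oc (-1/12) 0 (-1/6) (1/12) (-1/6) (-1/12) (1/6) (-1/12)),
   (oc (1/8) (5/24) (1/8) (1/24) 0 0 (-1/12) (-1/6),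
    oc (-1/12) 0 (-1/12) (-1/6) (-1/12) (1/6) (-1/6) (1/12),
    oc (-1/12) 0 (-1/6) (1/12) (-1/12) (1/6) (-1/12) (-1/6)),
   (oc (1/8) (-5/24) (1/24) (-1/8) (1/6) (1/12) 0 0,
    oc (-1/12) 0 (-1/12) (-1/6) (-1/6) (-1/12) (-1/12) (-1/6),
    oc (-1/12) 0 (1/6) (-1/12) (1/12) (-1/6) (-1/12) (-1/6)),
   (oc (1/8) (5/24) (-1/8) (-1/24) 0 0 (-1/6) (1/12),
    oc (-1/12) 0 (1/12) (1/6) (-1/6) (-1/12) (1/12) (1/6),
    oc (-1/12) 0 (1/6) (-1/12) (-1/6) (-1/12) (-1/6) (1/12)),
   (oc (1/8) (-5/24) (-1/24) (1/8) (-1/12) (1/6) 0 0,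
    oc (-1/12) 0 (1/12) (1/6) (1/12) (-1/6) (-1/6) (1/12),
    oc (-1/12) 0 (-1/6) (1/12) (1/6) (1/12) (-1/6) (1/12))]"

definition generators :: "omat list" where
  "generators = map (\<lambda>(x, y, z). unbiased_mat x y z) generator_triples"

definition cyclic_simplex :: "omat list" where
  "cyclic_simplex = centre # concat (map orbit generators)"

lemma cyc_shift_centre: "cyc_shift centre = centre"
  by (simp add: centre_def cyc_shift_unbiased_mat)

lemma cyc_shift_image_cyclic_simplex: "cyc_shift ` set cyclic_simplex = set cyclic_simplex"
  unfolding cyclic_simplex_def by (rule cyc_shift_image_orbits[OF cyc_shift_centre])

lemma set_cyclic_simplex: "set cyclic_simplex = (\<Union>M\<in>set (centre # generators). set (orbit M))"
  by (simp add: cyclic_simplex_def orbit_def cyc_shift_centre)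

lemma cyclic_simplex_distinct: "distinct cyclic_simplex"
  by (simp add: cyclic_simplex_def centre_def generators_def generator_triples_def orbit_def
      cyc_shift_unbiased_mat unbiased_mat_eq_iff oc_arith)

lemma card_cyclic_simplex: "card (set cyclic_simplex) = 25"
  using distinct_card[OF cyclic_simplex_distinct]
  by (simp add: cyclic_simplex_def generators_def generator_triples_def orbit_def)

lemma centre_OP2: "centre \<in> OP2"
  unfolding centre_def by (rule unbiased_mat_in_OP2) (simp_all add: oc_arith)

lemma generators_OP2: "set generators \<subseteq> OP2"
  unfolding generators_def generator_triples_def
  by (simp, intro conjI unbiased_mat_in_OP2) (simp_all add: oc_arith)

lemma cyclic_simplex_OP2: "set cyclic_simplex \<subseteq> OP2"
  unfolding cyclic_simplex_def by (rule orbits_subset_OP2[OF centre_OP2 generators_OP2])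

lemma minner_representatives:
  "\<forall>M\<in>set (centre # generators). \<forall>B\<in>set cyclic_simplex. M \<noteq> B \<longrightarrow> minner M B = 11/36"
  unfolding cyclic_simplex_def centre_def generators_def generator_triples_def orbit_def
  by (simp add: cyc_shift_unbiased_mat minner_unbiased_mat unbiased_mat_eq_iff oc_arith)

lemma minner_cyclic_simplex:
  "\<forall>A\<in>set cyclic_simplex. \<forall>B\<in>set cyclic_simplex. A \<noteq> B \<longrightarrow> minner A B = 11/36"
proof (intro ballI impI)
  fix A B
  assume A: "A \<in> set cyclic_simplex" and B: "B \<in> set cyclic_simplex" "A \<noteq> B"
  obtain M where "M \<in> set (centre # generators)" "A \<in> set (orbit M)"
    using A unfolding set_cyclic_simplex by blast
  then show "minner A B = 11/36"
    using minner_orbit[OF equalityD1[OF cyc_shift_image_cyclic_simplex]] minner_representatives B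
    by blast
qed

lemma cyclic_simplex_tight: "tight_simplex (set cyclic_simplex)"
  unfolding tight_simplex_def card_cyclic_simplex
  using cyclic_simplex_OP2 minner_cyclic_simplex by simp

theorem theorem5p6:
  shows "\<exists>S. card S = 25 \<and> tight_simplex S \<and> cyc_shift ` S = S"
  using card_cyclic_simplex cyclic_simplex_tight cyc_shift_image_cyclic_simplex by blast

end
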